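(* Let $S \in \mathbb{Z}^{m\times m}$ be nonsingular, $F \in \mathbb{Z}^{n\times m}$, and let $H\in\mathbb{Z}^{n\times n}$ be the Hermite basis of $\mathcal{R}(S,F)$. Let $n = n_1+n_2$ with $n_1,n_2\ge 0$, write $H = \begin{bmatrix} \bar H_1 & H_{12} \\ 0 & \bar H_2\end{bmatrix}$ with $\bar H_1 \in \mathbb{Z}^{n_1\times n_1}$, and set $H_1 = \mathrm{diag}(\bar H_1, I_{n_2})$, $H_2 = \begin{bmatrix} I_{n_1} & H_{12}\\ 0 & \bar H_2\end{bmatrix}$. Let $A$ be the last $n_2$ rows of $F$ and let $T\in\mathbb{Z}^{m\times m}$ be the Hermite basis of $\begin{bmatrix} S\\ A\end{bmatrix}$. Then: (1) $H_2$ is the Hermite basis of $\mathcal{R}(S, H_1F)$; (2) the Hermite basis of $\begin{bmatrix} S \\ H_1F\end{bmatrix}$ is equal to $T$.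
   Context: For an integer matrix $A$, $\mathcal{L}(A)$ denotes the lattice of all $\mathbb{Z}$-linear combinations of the rows of $A$. For $M \in \mathbb{Z}^{\ell \times m}$ of full column rank and $F \in \mathbb{Z}^{n \times m}$, the integer relations lattice is $\mathcal{R}(M,F) := \{p \in \mathbb{Z}^{1\times n} : pF \in \mathcal{L}(M)\}$; its Hermite basis is the unique nonsingular $H\in\mathbb{Z}^{n\times n}$ in Hermite form with $\mathcal{L}(H)=\mathcal{R}(M,F)$. A nonsingular square integer matrix is in Hermite form if it is upper triangular with positive diagonal entries $h_j$ and each entry above the diagonal in column $j$ lies in $[0,h_j)$. The Hermite basis of a full column rank integer matrix $B$ with $m$ columns is the unique $m\times m$ matrix in Hermite form whose row lattice equals $\mathcal{L}(B)$. *)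

theory Defs
  imports "Jordan_Normal_Form.Determinant"
begin

definition row_lattice :: "int mat \<Rightarrow> int vec set" where
  "row_lattice A = {transpose_mat A *\<^sub>v c | c. c \<in> carrier_vec (dim_row A)}"

definition relations_lattice :: "int mat \<Rightarrow> int mat \<Rightarrow> int vec set" where
  "relations_lattice M F =
     {p \<in> carrier_vec (dim_row F). transpose_mat F *\<^sub>v p \<in> row_lattice M}"

definition hermite_form :: "int mat \<Rightarrow> bool" where
  "hermite_form H \<longleftrightarrow>
     dim_row H = dim_col H \<and> upper_triangular H \<and>
     (\<forall>j < dim_row H. H $$ (j,j) > 0) \<and>
     (\<forall>i j. i < j \<longrightarrow> j < dim_row H \<longrightarrow> 0 \<le> H $$ (i,j) \<and> H $$ (i,j) < H $$ (j,j))"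

definition hermite_basis_of_relations :: "int mat \<Rightarrow> int mat \<Rightarrow> int mat \<Rightarrow> bool" where
  "hermite_basis_of_relations H M F \<longleftrightarrow>
     H \<in> carrier_mat (dim_row F) (dim_row F) \<and> hermite_form H \<and>
     row_lattice H = relations_lattice M F"

definition hermite_basis_of :: "int mat \<Rightarrow> int mat \<Rightarrow> bool" where
  "hermite_basis_of H B \<longleftrightarrow>
     H \<in> carrier_mat (dim_col B) (dim_col B) \<and> hermite_form H \<and>
     row_lattice H = row_lattice B"

end

theory Submission
  imports Defs
begin

(* H factors as H2 * H1 with H1 = diag(H1b, I) and both factors again in Hermite form.
   Since H1 is nonsingular, p H1 determines p, and p lies in R(S, H1 F) iff p H1 lies in
   R(S, F) = L(H2 H1), i.e. iff p lies in L(H2).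
   For (2) write F = [Fb; A], so H1 F = [H1b Fb; A]. The first n1 rows of H F, namely
   H1b Fb + H12 A, lie in L(S); hence the rows of H1b Fb already lie in L([S; A]), and
   adjoining them to [S; A] does not change the lattice. *)

lemma transpose_append_rows_mult_append_vec:
  assumes A: "A \<in> carrier_mat r1 k" and B: "B \<in> carrier_mat r2 k"
    and a: "a \<in> carrier_vec r1" and b: "b \<in> carrier_vec r2"
  shows "transpose_mat (A @\<^sub>r B) *\<^sub>v (a @\<^sub>v b) = transpose_mat A *\<^sub>v a + transpose_mat B *\<^sub>v b"
proof -
  have transpose: "transpose_mat (A @\<^sub>r B) =
      four_block_mat (transpose_mat A) (transpose_mat B) (0\<^sub>m 0 r1) (0\<^sub>m 0 r2)"
    unfolding append_rows_def using A B by (subst transpose_four_block_mat) auto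
  have "transpose_mat (A @\<^sub>r B) *\<^sub>v (a @\<^sub>v b) =
      (transpose_mat A *\<^sub>v a + transpose_mat B *\<^sub>v b) @\<^sub>v (0\<^sub>m 0 r1 *\<^sub>v a + 0\<^sub>m 0 r2 *\<^sub>v b)"
    unfolding transpose
    by (rule four_block_mat_mult_vec) (use A B a b in auto)
  also have "\<dots> = transpose_mat A *\<^sub>v a + transpose_mat B *\<^sub>v b"
    by (rule eq_vecI) auto
  finally show ?thesis .
qed

lemma mult_four_block_mat_append_rows:
  assumes A: "A \<in> carrier_mat r1 k1" and B: "B \<in> carrier_mat r1 k2"
    and C: "C \<in> carrier_mat r2 k1" and D: "D \<in> carrier_mat r2 k2"
    and X: "X \<in> carrier_mat k1 m" and Y: "Y \<in> carrier_mat k2 m"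
  shows "four_block_mat A B C D * (X @\<^sub>r Y) = (A * X + B * Y) @\<^sub>r (C * X + D * Y)"
  using A B C D X Y unfolding append_rows_def
  by (subst mult_four_block_mat[OF A B C D]) auto

lemma append_rows_split_mat:
  assumes "F \<in> carrier_mat (k + l) m"
  shows "F = mat k m (\<lambda>(i,j). F $$ (i,j)) @\<^sub>r mat l m (\<lambda>(i,j). F $$ (k + i, j))"
  using assms by (auto intro!: eq_matI simp: append_rows_def)

lemma four_block_mat_upper_factor:
  fixes A :: "'a :: semiring_1 mat"
  assumes A: "A \<in> carrier_mat k k" and B: "B \<in> carrier_mat k l" and D: "D \<in> carrier_mat l l"
  shows "four_block_mat A B (0\<^sub>m l k) D =
    four_block_mat (1\<^sub>m k) B (0\<^sub>m l k) D * four_block_mat A (0\<^sub>m k l) (0\<^sub>m l k) (1\<^sub>m l)"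
  using A B D by (subst mult_four_block_mat[of _ k k _ l _ l _ _ k _ l]) auto

lemma mult_mat_vec_left_cancel:
  fixes K :: "'a :: idom mat"
  assumes K: "K \<in> carrier_mat n n" "det K \<noteq> 0"
    and p: "p \<in> carrier_vec n" and q: "q \<in> carrier_vec n"
    and eq: "K *\<^sub>v p = K *\<^sub>v q"
  shows "p = q"
proof -
  have "K *\<^sub>v (p - q) = 0\<^sub>v n"
    using K p q eq by (simp add: mult_minus_distrib_mat_vec)
  then have "p - q = 0\<^sub>v n"
    using K det_0_iff_vec_prod_zero[OF K(1)] minus_carrier_vec[OF p q] by blast
  then have "p $ i = q $ i" if "i < n" for i
    using p q that by (metis carrier_vecD eq_iff_diff_eq_0 index_minus_vec(1) index_zero_vec(1))
  then show ?thesis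
    using p q by (auto intro: eq_vecI)
qed

lemma row_lattice_image:
  "row_lattice A = (\<lambda>c. transpose_mat A *\<^sub>v c) ` carrier_vec (dim_row A)"
  unfolding row_lattice_def by blast

lemma row_lattice_carrier: "row_lattice A \<subseteq> carrier_vec (dim_col A)"
  unfolding row_lattice_image by (auto intro!: carrier_vecI)

lemma row_lattice_zero: "0\<^sub>v (dim_col A) \<in> row_lattice A"
proof -
  have "transpose_mat A *\<^sub>v 0\<^sub>v (dim_row A) = 0\<^sub>v (dim_col A)"
    by (rule eq_vecI) (auto simp: scalar_prod_def)
  then show ?thesis unfolding row_lattice_image by (metis image_eqI zero_carrier_vec)
qed

lemma row_lattice_add:
  assumes "x \<in> row_lattice A" "y \<in> row_lattice A"
  shows "x + y \<in> row_lattice A"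
proof -
  obtain c d where "c \<in> carrier_vec (dim_row A)" "d \<in> carrier_vec (dim_row A)"
    and "x = transpose_mat A *\<^sub>v c" "y = transpose_mat A *\<^sub>v d"
    using assms by (auto simp: row_lattice_def)
  then have "x + y = transpose_mat A *\<^sub>v (c + d)" "c + d \<in> carrier_vec (dim_row A)"
    by (auto simp: mult_add_distrib_mat_vec[of _ "dim_col A" "dim_row A"])
  then show ?thesis unfolding row_lattice_image by blast
qed

lemma row_lattice_append_rows:
  assumes A: "A \<in> carrier_mat r1 k" and B: "B \<in> carrier_mat r2 k"
  shows "x \<in> row_lattice (A @\<^sub>r B) \<longleftrightarrow>
    (\<exists>a \<in> row_lattice A. \<exists>b \<in> row_lattice B. x = a + b)"
proof
  assume "x \<in> row_lattice (A @\<^sub>r B)"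
  then obtain c where c: "c \<in> carrier_vec (r1 + r2)" "x = transpose_mat (A @\<^sub>r B) *\<^sub>v c"
    using carrier_append_rows[OF A B] by (auto simp: row_lattice_def)
  then have "x = transpose_mat A *\<^sub>v vec_first c r1 + transpose_mat B *\<^sub>v vec_last c r2"
    using transpose_append_rows_mult_append_vec[OF A B]
    by (metis vec_first_carrier vec_first_last_append vec_last_carrier)
  then show "\<exists>a \<in> row_lattice A. \<exists>b \<in> row_lattice B. x = a + b"
    using A B unfolding row_lattice_image by (auto intro: vec_first_carrier vec_last_carrier)
next
  assume "\<exists>a \<in> row_lattice A. \<exists>b \<in> row_lattice B. x = a + b"
  then obtain a b where "a \<in> carrier_vec r1" "b \<in> carrier_vec r2"
    and "x = transpose_mat A *\<^sub>v a + transpose_mat B *\<^sub>v b"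
    using A B by (auto simp: row_lattice_def)
  then have "x = transpose_mat (A @\<^sub>r B) *\<^sub>v (a @\<^sub>v b)"
    and "a @\<^sub>v b \<in> carrier_vec (dim_row (A @\<^sub>r B))"
    using transpose_append_rows_mult_append_vec[OF A B] carrier_append_rows[OF A B] by auto
  then show "x \<in> row_lattice (A @\<^sub>r B)"
    unfolding row_lattice_image by blast
qed

lemma row_lattice_append_rows_upper:
  assumes "A \<in> carrier_mat r1 k" "B \<in> carrier_mat r2 k"
  shows "row_lattice A \<subseteq> row_lattice (A @\<^sub>r B)"
proof
  fix x assume x: "x \<in> row_lattice A"
  then have "x = x + 0\<^sub>v k"
    using row_lattice_carrier assms by fastforce
  then show "x \<in> row_lattice (A @\<^sub>r B)"
    using x row_lattice_zero[of B] assms by (auto simp: row_lattice_append_rows)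
qed

lemma row_lattice_append_rows_lower:
  assumes "A \<in> carrier_mat r1 k" "B \<in> carrier_mat r2 k"
  shows "row_lattice B \<subseteq> row_lattice (A @\<^sub>r B)"
proof
  fix x assume x: "x \<in> row_lattice B"
  then have "x = 0\<^sub>v k + x"
    using row_lattice_carrier assms by fastforce
  then show "x \<in> row_lattice (A @\<^sub>r B)"
    using x row_lattice_zero[of A] assms by (auto simp: row_lattice_append_rows)
qed

lemma row_lattice_append_rows_subset:
  assumes "A \<in> carrier_mat r1 k" "B \<in> carrier_mat r2 k"
    and "row_lattice A \<subseteq> row_lattice C" "row_lattice B \<subseteq> row_lattice C"
  shows "row_lattice (A @\<^sub>r B) \<subseteq> row_lattice C"
  using assms row_lattice_add by (fastforce simp: row_lattice_append_rows)

lemma row_lattice_mult: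
  assumes B: "B \<in> carrier_mat r n" and K: "K \<in> carrier_mat n k"
  shows "row_lattice (B * K) = (\<lambda>v. transpose_mat K *\<^sub>v v) ` row_lattice B"
proof -
  have "transpose_mat (B * K) *\<^sub>v c = transpose_mat K *\<^sub>v (transpose_mat B *\<^sub>v c)"
    if "c \<in> carrier_vec r" for c
    using that B K by (simp add: transpose_mult)
  then show ?thesis
    using B K unfolding row_lattice_image by (auto simp: image_image)
qed

lemma row_lattice_mult_subset:
  assumes "U \<in> carrier_mat r (dim_row A)"
  shows "row_lattice (U * A) \<subseteq> row_lattice A"
  using row_lattice_carrier[of U] assms
  unfolding row_lattice_mult[OF assms carrier_matI[OF refl refl]] row_lattice_image[of A]
  by auto

lemma row_lattice_subset_of_add:
  assumes B: "B \<in> carrier_mat r k" and D: "D \<in> carrier_mat r k"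
    and "row_lattice (B + D) \<subseteq> row_lattice C" "row_lattice D \<subseteq> row_lattice C"
  shows "row_lattice B \<subseteq> row_lattice C"
proof
  fix x assume "x \<in> row_lattice B"
  then obtain c where c: "c \<in> carrier_vec r" "x = transpose_mat B *\<^sub>v c"
    using B by (auto simp: row_lattice_def)
  have "x = transpose_mat (B + D) *\<^sub>v c + transpose_mat D *\<^sub>v (- c)"
    using B D c by (auto simp: transpose_add add_mult_distrib_mat_vec)
  moreover have "transpose_mat (B + D) *\<^sub>v c \<in> row_lattice (B + D)"
    "transpose_mat D *\<^sub>v (- c) \<in> row_lattice D"
    using B D c unfolding row_lattice_image by auto
  ultimately show "x \<in> row_lattice C"
    using assms row_lattice_add by blast
qed

lemma row_lattice_append_rows_reduce:
  assumes S: "S \<in> carrier_mat r m" and C: "C \<in> carrier_mat k m"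
    and B: "B \<in> carrier_mat k l" and A: "A \<in> carrier_mat l m"
    and reduce: "row_lattice (C + B * A) \<subseteq> row_lattice S"
  shows "row_lattice (S @\<^sub>r C @\<^sub>r A) = row_lattice (S @\<^sub>r A)"
proof
  have S_sub: "row_lattice S \<subseteq> row_lattice (S @\<^sub>r A)"
    and A_sub: "row_lattice A \<subseteq> row_lattice (S @\<^sub>r A)"
    using row_lattice_append_rows_upper[OF S A] row_lattice_append_rows_lower[OF S A] .
  have "row_lattice (B * A) \<subseteq> row_lattice (S @\<^sub>r A)"
    using row_lattice_mult_subset[of B] A B A_sub by auto
  then have "row_lattice C \<subseteq> row_lattice (S @\<^sub>r A)"
    using row_lattice_subset_of_add[OF C _ _] reduce S_sub B A
    by (meson mult_carrier_mat subset_trans)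
  then show "row_lattice (S @\<^sub>r C @\<^sub>r A) \<subseteq> row_lattice (S @\<^sub>r A)"
    using S_sub A_sub S C A by (intro row_lattice_append_rows_subset) auto
next
  have "row_lattice A \<subseteq> row_lattice (S @\<^sub>r C @\<^sub>r A)"
    using row_lattice_append_rows_lower[OF C A] row_lattice_append_rows_lower[OF S] C A by blast
  moreover have "row_lattice S \<subseteq> row_lattice (S @\<^sub>r C @\<^sub>r A)"
    using row_lattice_append_rows_upper[OF S, of "C @\<^sub>r A"] C A by blast
  ultimately show "row_lattice (S @\<^sub>r A) \<subseteq> row_lattice (S @\<^sub>r C @\<^sub>r A)"
    by (rule row_lattice_append_rows_subset[OF S A, rotated])
qed

lemma relations_lattice_mult:
  assumes K: "K \<in> carrier_mat n l" and F: "F \<in> carrier_mat l m"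
  shows "relations_lattice M (K * F) =
    {p \<in> carrier_vec n. transpose_mat K *\<^sub>v p \<in> relations_lattice M F}"
  using K F by (auto simp: relations_lattice_def transpose_mult)

lemma row_lattice_mult_relations_lattice:
  assumes "row_lattice H = relations_lattice M F"
    and "H \<in> carrier_mat r n" "F \<in> carrier_mat n m"
  shows "row_lattice (H * F) \<subseteq> row_lattice M"
  using assms by (auto simp: row_lattice_mult relations_lattice_def)

lemma relations_lattice_mult_nonsingular:
  assumes B: "B \<in> carrier_mat r n" and K: "K \<in> carrier_mat n n" "det K \<noteq> 0"
    and F: "F \<in> carrier_mat n m"
    and BK: "row_lattice (B * K) = relations_lattice M F"
  shows "row_lattice B = relations_lattice M (K * F)"
proof -
  have KT: "transpose_mat K \<in> carrier_mat n n" "det (transpose_mat K) \<noteq> 0"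
    using K by (auto simp: det_transpose)
  have "p \<in> row_lattice B \<longleftrightarrow>
      transpose_mat K *\<^sub>v p \<in> (\<lambda>v. transpose_mat K *\<^sub>v v) ` row_lattice B"
    if p: "p \<in> carrier_vec n" for p
    using row_lattice_carrier[of B] B p mult_mat_vec_left_cancel[OF KT p] by auto
  then show ?thesis
    using row_lattice_carrier[of B] B K F
    unfolding relations_lattice_mult[OF K(1) F] BK[symmetric] row_lattice_mult[OF B K(1)]
    by auto
qed

lemma hermite_form_one_mat: "hermite_form (1\<^sub>m n)"
  by (auto simp: hermite_form_def upper_triangular_def)

lemma hermite_form_four_block_mat:
  assumes A: "A \<in> carrier_mat k k" and B: "B \<in> carrier_mat k l" and D: "D \<in> carrier_mat l l"
  shows "hermite_form (four_block_mat A B (0\<^sub>m l k) D) \<longleftrightarrow>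
    hermite_form A \<and> hermite_form D \<and> (\<forall>i<k. \<forall>j<l. 0 \<le> B $$ (i,j) \<and> B $$ (i,j) < D $$ (j,j))"
    (is "hermite_form ?M \<longleftrightarrow> _")
proof
  assume "hermite_form ?M"
  then have lower: "\<And>i j. j < i \<Longrightarrow> i < k + l \<Longrightarrow> ?M $$ (i,j) = 0"
    and diag: "\<And>j. j < k + l \<Longrightarrow> ?M $$ (j,j) > 0"
    and upper: "\<And>i j. i < j \<Longrightarrow> j < k + l \<Longrightarrow> 0 \<le> ?M $$ (i,j) \<and> ?M $$ (i,j) < ?M $$ (j,j)"
    using A D by (auto simp: hermite_form_def upper_triangular_def)
  have "hermite_form A"
  proof -
    have "A $$ (i,j) = 0" if "j < i" "i < k" for i j
      using lower[of j i] that A D by simp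
    moreover have "A $$ (j,j) > 0" if "j < k" for j
      using diag[of j] that A D by simp
    moreover have "0 \<le> A $$ (i,j) \<and> A $$ (i,j) < A $$ (j,j)" if "i < j" "j < k" for i j
      using upper[of i j] that A D by simp
    ultimately show ?thesis
      using A by (auto simp: hermite_form_def upper_triangular_def)
  qed
  moreover have "hermite_form D"
  proof -
    have "D $$ (i,j) = 0" if "j < i" "i < l" for i j
      using lower[of "k + j" "k + i"] that A D by simp
    moreover have "D $$ (j,j) > 0" if "j < l" for j
      using diag[of "k + j"] that A D by simp
    moreover have "0 \<le> D $$ (i,j) \<and> D $$ (i,j) < D $$ (j,j)" if "i < j" "j < l" for i j
      using upper[of "k + i" "k + j"] that A D by simp
    ultimately show ?thesis
      using D by (auto simp: hermite_form_def upper_triangular_def)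
  qed
  moreover have "0 \<le> B $$ (i,j) \<and> B $$ (i,j) < D $$ (j,j)" if "i < k" "j < l" for i j
    using upper[of i "k + j"] that A B D by simp
  ultimately show "hermite_form A \<and> hermite_form D \<and>
    (\<forall>i<k. \<forall>j<l. 0 \<le> B $$ (i,j) \<and> B $$ (i,j) < D $$ (j,j))"
    by blast
next
  assume "hermite_form A \<and> hermite_form D \<and>
    (\<forall>i<k. \<forall>j<l. 0 \<le> B $$ (i,j) \<and> B $$ (i,j) < D $$ (j,j))"
  then have lowerA: "\<And>i j. j < i \<Longrightarrow> i < k \<Longrightarrow> A $$ (i,j) = 0"
    and diagA: "\<And>j. j < k \<Longrightarrow> A $$ (j,j) > 0"
    and upperA: "\<And>i j. i < j \<Longrightarrow> j < k \<Longrightarrow> 0 \<le> A $$ (i,j) \<and> A $$ (i,j) < A $$ (j,j)"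
    and lowerD: "\<And>i j. j < i \<Longrightarrow> i < l \<Longrightarrow> D $$ (i,j) = 0"
    and diagD: "\<And>j. j < l \<Longrightarrow> D $$ (j,j) > 0"
    and upperD: "\<And>i j. i < j \<Longrightarrow> j < l \<Longrightarrow> 0 \<le> D $$ (i,j) \<and> D $$ (i,j) < D $$ (j,j)"
    and upperB: "\<And>i j. i < k \<Longrightarrow> j < l \<Longrightarrow> 0 \<le> B $$ (i,j) \<and> B $$ (i,j) < D $$ (j,j)"
    using A D by (auto simp: hermite_form_def upper_triangular_def)
  have "?M $$ (i,j) = 0" if "j < i" "i < k + l" for i j
    using that A B D lowerA lowerD by (cases "i < k"; cases "j < k") auto
  moreover have "?M $$ (j,j) > 0" if "j < k + l" for j
    using that A B D diagA diagD by (cases "j < k") auto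
  moreover have "0 \<le> ?M $$ (i,j) \<and> ?M $$ (i,j) < ?M $$ (j,j)" if "i < j" "j < k + l" for i j
    using that A B D upperA upperB upperD by (cases "i < k"; cases "j < k") auto
  ultimately show "hermite_form ?M"
    using A D unfolding hermite_form_def upper_triangular_def by auto
qed

lemma hermite_form_det_nonzero:
  assumes "hermite_form H"
  shows "det H \<noteq> 0"
proof -
  have H: "H \<in> carrier_mat (dim_row H) (dim_row H)" "upper_triangular H"
    and diag: "\<And>j. j < dim_row H \<Longrightarrow> H $$ (j,j) > 0"
    using assms unfolding hermite_form_def by (auto intro!: carrier_matI)
  have "0 \<notin> set (diag_mat H)"
    using diag unfolding diag_mat_def by fastforce
  then show ?thesis
    unfolding det_upper_triangular[OF H(2,1)] prod_list_zero_iff .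
qed

lemma hermite_form_split_block:
  assumes H: "H \<in> carrier_mat (k + l) (k + l)" "hermite_form H"
    and split: "split_block H k k = (H1, H12, H21, H2)"
  shows "H = four_block_mat H1 H12 (0\<^sub>m l k) H2"
    and "hermite_form (four_block_mat (1\<^sub>m k) H12 (0\<^sub>m l k) H2)"
    and "hermite_form (four_block_mat H1 (0\<^sub>m k l) (0\<^sub>m l k) (1\<^sub>m l))"
proof -
  have dims: "dim_row H = k + l" "dim_col H = k + l"
    using H by auto
  note blocks = split_block[OF split dims]
  have "H21 = 0\<^sub>m l k"
    using split H unfolding split_block_def hermite_form_def upper_triangular_def
    by (auto intro!: eq_matI)
  then show H_eq: "H = four_block_mat H1 H12 (0\<^sub>m l k) H2"
    using blocks H by auto
  have "hermite_form (four_block_mat H1 H12 (0\<^sub>m l k) H2)"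
    unfolding H_eq[symmetric] by (rule H(2))
  then have "hermite_form H1" "hermite_form H2"
    "\<forall>i<k. \<forall>j<l. 0 \<le> H12 $$ (i,j) \<and> H12 $$ (i,j) < H2 $$ (j,j)"
    using hermite_form_four_block_mat[OF blocks(1,2,4)] by auto
  then show "hermite_form (four_block_mat (1\<^sub>m k) H12 (0\<^sub>m l k) H2)"
    and "hermite_form (four_block_mat H1 (0\<^sub>m k l) (0\<^sub>m l k) (1\<^sub>m l))"
    using blocks H by (auto simp: hermite_form_four_block_mat hermite_form_one_mat)
qed

lemma hermite_basis_of_relations_block_diag_mult:
  assumes F: "F \<in> carrier_mat (k + l) m" and H: "hermite_basis_of_relations H S F"
    and split: "split_block H k k = (H1, H12, H21, H2)"
  shows "hermite_basis_of_relations (four_block_mat (1\<^sub>m k) H12 (0\<^sub>m l k) H2) S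
    (four_block_mat H1 (0\<^sub>m k l) (0\<^sub>m l k) (1\<^sub>m l) * F)"
proof -
  define D where "D = four_block_mat H1 (0\<^sub>m k l) (0\<^sub>m l k) (1\<^sub>m l)"
  define U where "U = four_block_mat (1\<^sub>m k) H12 (0\<^sub>m l k) H2"
  have Hc: "H \<in> carrier_mat (k + l) (k + l)" and "hermite_form H"
    and HL: "row_lattice H = relations_lattice S F"
    using H F unfolding hermite_basis_of_relations_def by auto
  note H_blocks = hermite_form_split_block[OF this(1,2) split]
  note blocks = split_block[OF split carrier_matD[OF Hc]]
  have Dc: "D \<in> carrier_mat (k + l) (k + l)" and Uc: "U \<in> carrier_mat (k + l) (k + l)"
    using blocks unfolding D_def U_def by auto
  have "H = U * D"
    unfolding U_def D_def
    by (subst H_blocks(1)) (rule four_block_mat_upper_factor[OF blocks(1,2,4)])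
  then have "row_lattice U = relations_lattice S (D * F)"
    using relations_lattice_mult_nonsingular[OF Uc Dc _ F] HL
      hermite_form_det_nonzero[OF H_blocks(3)]
    unfolding D_def by simp
  then show ?thesis
    using H_blocks(2) Uc Dc F
    unfolding D_def[symmetric] U_def[symmetric] hermite_basis_of_relations_def by auto
qed

lemma row_lattice_append_rows_block_diag_mult:
  assumes S: "S \<in> carrier_mat r m" and F: "F \<in> carrier_mat (k + l) m"
    and H: "hermite_basis_of_relations H S F"
    and split: "split_block H k k = (H1, H12, H21, H2)"
  shows "row_lattice (S @\<^sub>r four_block_mat H1 (0\<^sub>m k l) (0\<^sub>m l k) (1\<^sub>m l) * F) =
    row_lattice (S @\<^sub>r mat l m (\<lambda>(i,j). F $$ (k + i, j)))"
proof -
  define A where "A = mat l m (\<lambda>(i,j). F $$ (k + i, j))"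
  define F1 where "F1 = mat k m (\<lambda>(i,j). F $$ (i,j))"
  have Hc: "H \<in> carrier_mat (k + l) (k + l)" and "hermite_form H"
    and HL: "row_lattice H = relations_lattice S F"
    using H F unfolding hermite_basis_of_relations_def by auto
  note H_blocks = hermite_form_split_block[OF this(1,2) split]
  note blocks = split_block[OF split carrier_matD[OF Hc]]
  have F1: "F1 \<in> carrier_mat k m" and A: "A \<in> carrier_mat l m"
    unfolding F1_def A_def by auto
  have F_eq: "F = F1 @\<^sub>r A"
    unfolding F1_def A_def using F by (rule append_rows_split_mat)
  have HF: "H * F = (H1 * F1 + H12 * A) @\<^sub>r (0\<^sub>m l k * F1 + H2 * A)"
    unfolding F_eq using blocks
    by (subst H_blocks(1), subst mult_four_block_mat_append_rows[of _ k k _ l _ l _ _ m])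
      (use F1 A in auto)
  have "row_lattice (H1 * F1 + H12 * A) \<subseteq> row_lattice (H * F)"
    unfolding HF by (rule row_lattice_append_rows_upper[of _ k m _ l]) (use blocks F1 A in auto)
  also have "\<dots> \<subseteq> row_lattice S"
    using row_lattice_mult_relations_lattice[OF HL Hc F] .
  finally have "row_lattice (S @\<^sub>r (H1 * F1) @\<^sub>r A) = row_lattice (S @\<^sub>r A)"
    using blocks S F1 A by (intro row_lattice_append_rows_reduce) auto
  moreover have "four_block_mat H1 (0\<^sub>m k l) (0\<^sub>m l k) (1\<^sub>m l) * F = (H1 * F1) @\<^sub>r A"
    unfolding F_eq using blocks
    by (subst mult_four_block_mat_append_rows[of _ k k _ l _ l _ _ m]) (use F1 A in auto)
  ultimately show ?thesis
    unfolding A_def by simp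
qed

theorem mainTheorem12:
  fixes S F H T H1b H12 H21 H2b :: "int mat" and m n n1 n2 :: nat
  assumes S: "S \<in> carrier_mat m m" and detS: "det S \<noteq> 0"
    and F: "F \<in> carrier_mat n m"
    and n: "n = n1 + n2"
    and H: "hermite_basis_of_relations H S F"
    and split: "split_block H n1 n1 = (H1b, H12, H21, H2b)"
    and T: "hermite_basis_of T (S @\<^sub>r mat n2 m (\<lambda>(i,j). F $$ (n1 + i, j)))"
  shows "hermite_basis_of_relations
           (four_block_mat (1\<^sub>m n1) H12 (0\<^sub>m n2 n1) H2b) S
           (four_block_mat H1b (0\<^sub>m n1 n2) (0\<^sub>m n2 n1) (1\<^sub>m n2) * F)
       \<and> hermite_basis_of T
           (S @\<^sub>r (four_block_mat H1b (0\<^sub>m n1 n2) (0\<^sub>m n2 n1) (1\<^sub>m n2) * F))"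
proof -
  have F: "F \<in> carrier_mat (n1 + n2) m"
    using F n by simp
  let ?A = "mat n2 m (\<lambda>(i,j). F $$ (n1 + i, j))"
  let ?H1 = "four_block_mat H1b (0\<^sub>m n1 n2) (0\<^sub>m n2 n1) (1\<^sub>m n2)"
  have "row_lattice (S @\<^sub>r ?H1 * F) = row_lattice (S @\<^sub>r ?A)"
    by (rule row_lattice_append_rows_block_diag_mult[OF S F H split])
  moreover have "dim_col (S @\<^sub>r ?H1 * F) = dim_col (S @\<^sub>r ?A)"
    using S F split_block[OF split] H
    by (simp add: append_rows_def hermite_basis_of_relations_def)
  ultimately show ?thesis
    using hermite_basis_of_relations_block_diag_mult[OF F H split] T
    unfolding hermite_basis_of_def by simp
qed

end
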